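(* For $n\ge 1$, the number of shallow $123$-avoiding involutions in $S_n$ equals $\lfloor n^2/4\rfloor+1$.
   Context: For $\pi\in S_n$: $D(\pi)=\sum_{i}|\pi_i-i|$, $I(\pi)$ is the number of inversions, $T(\pi)=n-\mathrm{cyc}(\pi)$ with $\mathrm{cyc}$ the number of cycles in the disjoint cycle decomposition; $\pi$ is shallow if $I(\pi)+T(\pi)=D(\pi)$. A permutation avoids a pattern $\sigma$ if it has no subsequence order-isomorphic to $\sigma$. An involution is a permutation with $\pi=\pi^{-1}$. *)

theory Defs
  imports "HOL-Combinatorics.Combinatorics"
begin

text \<open>Permutations of [n] = {1..n} are functions p :: nat => nat with p permutes {1..n}.\<close>

definition disp :: "nat \<Rightarrow> (nat \<Rightarrow> nat) \<Rightarrow> nat" where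
  "disp n p = (\<Sum>i\<in>{1..n}. nat \<bar>int (p i) - int i\<bar>)"

definition inv_count :: "nat \<Rightarrow> (nat \<Rightarrow> nat) \<Rightarrow> nat" where
  "inv_count n p = card {(i, j). i \<in> {1..n} \<and> j \<in> {1..n} \<and> i < j \<and> p i > p j}"

definition num_cycles :: "nat \<Rightarrow> (nat \<Rightarrow> nat) \<Rightarrow> nat" where
  "num_cycles n p = card (orbit p ` {1..n})"

definition refl_len :: "nat \<Rightarrow> (nat \<Rightarrow> nat) \<Rightarrow> nat" where
  "refl_len n p = n - num_cycles n p"

definition shallow :: "nat \<Rightarrow> (nat \<Rightarrow> nat) \<Rightarrow> bool" where
  "shallow n p \<longleftrightarrow> inv_count n p + refl_len n p = disp n p"

definition contains_pattern :: "nat \<Rightarrow> (nat \<Rightarrow> nat) \<Rightarrow> nat \<Rightarrow> (nat \<Rightarrow> nat) \<Rightarrow> bool" where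
  "contains_pattern n p k s \<longleftrightarrow>
     (\<exists>f. strict_mono_on {1..k} f \<and> f ` {1..k} \<subseteq> {1..n} \<and>
          (\<forall>a\<in>{1..k}. \<forall>b\<in>{1..k}. p (f a) < p (f b) \<longleftrightarrow> s a < s b))"

definition avoids :: "nat \<Rightarrow> (nat \<Rightarrow> nat) \<Rightarrow> nat \<Rightarrow> (nat \<Rightarrow> nat) \<Rightarrow> bool" where
  "avoids n p k s \<longleftrightarrow> \<not> contains_pattern n p k s"

definition pat123 :: "nat \<Rightarrow> nat" where
  "pat123 = id"

definition involution :: "(nat \<Rightarrow> nat) \<Rightarrow> bool" where
  "involution p \<longleftrightarrow> p \<circ> p = id"

end

theory Submission
  imports Defs
begin

text \<open>Draw an involution as arcs \<open>i \<frown> p i\<close>. Writing \<open>|p i - i|\<close> as the number of positions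
  between \<open>i\<close> and \<open>p i\<close> and summing over pairs shows \<open>D = I + T + 2 X\<close>, where \<open>X\<close> counts
  crossing arcs \<open>i < j < p i < p j\<close>; so the shallow involutions are the noncrossing ones.
  A noncrossing involution of an interval \<open>[l, r]\<close> without an increasing triple either joins
  \<open>l\<close> to \<open>r\<close> by an arc, leaving such an involution of \<open>[l + 1, r - 1]\<close>, or it reverses the two
  blocks \<open>[l, m]\<close> and \<open>[m + 1, r]\<close> for some \<open>l \<le> m < r\<close>. With \<open>k = r - l + 1\<close> this gives
  \<open>c k = (k - 1) + c (k - 2)\<close>, whose solution is \<open>\<lfloor>k\<^sup>2/4\<rfloor> + 1\<close>.\<close>

definition increasing_triple_free :: "nat \<Rightarrow> nat \<Rightarrow> (nat \<Rightarrow> nat) \<Rightarrow> bool" where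
  "increasing_triple_free l r p \<longleftrightarrow>
     (\<forall>i j k. l \<le> i \<longrightarrow> i < j \<longrightarrow> j < k \<longrightarrow> k \<le> r \<longrightarrow> \<not> (p i < p j \<and> p j < p k))"

definition crossing_free :: "nat \<Rightarrow> nat \<Rightarrow> (nat \<Rightarrow> nat) \<Rightarrow> bool" where
  "crossing_free l r p \<longleftrightarrow> \<not> (\<exists>a c. l \<le> a \<and> a < c \<and> c < p a \<and> p a < p c \<and> p c \<le> r)"

lemma avoids_123_iff: "avoids n p 3 pat123 \<longleftrightarrow> increasing_triple_free 1 n p"
proof
  assume avoids: "avoids n p 3 pat123"
  show "increasing_triple_free 1 n p"
    unfolding increasing_triple_free_def
  proof (intro allI impI notI)
    fix i j k
    assume ijk: "1 \<le> i" "i < j" "j < k" "k \<le> n" "p i < p j \<and> p j < p k"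
    define f :: "nat \<Rightarrow> nat" where "f x = (if x = 1 then i else if x = 2 then j else k)" for x
    have three: "x \<in> {1..3} \<longleftrightarrow> x = 1 \<or> x = 2 \<or> x = 3" for x :: nat
      by auto
    have "strict_mono_on {1..3} f" "f ` {1..3} \<subseteq> {1..n}"
      "\<forall>a\<in>{1..3}. \<forall>b\<in>{1..3}. p (f a) < p (f b) \<longleftrightarrow> pat123 a < pat123 b"
      using ijk by (auto simp: strict_mono_on_def three f_def pat123_def)
    then have "contains_pattern n p 3 pat123"
      unfolding contains_pattern_def by blast
    with avoids show False
      by (simp add: avoids_def)
  qed
next
  assume incr_free: "increasing_triple_free 1 n p"
  show "avoids n p 3 pat123"
    unfolding avoids_def contains_pattern_def
  proof
    assume "\<exists>f. strict_mono_on {1..3} f \<and> f ` {1..3} \<subseteq> {1..n} \<and>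
      (\<forall>a\<in>{1..3}. \<forall>b\<in>{1..3}. p (f a) < p (f b) \<longleftrightarrow> pat123 a < pat123 b)"
    then obtain f where mono: "strict_mono_on {1..3} f" and range: "f ` {1..3} \<subseteq> {1..n}"
      and order: "\<forall>a\<in>{1..3}. \<forall>b\<in>{1..3}. p (f a) < p (f b) \<longleftrightarrow> pat123 a < pat123 b"
      by blast
    have "f 1 \<in> {1..n}" "f 3 \<in> {1..n}"
      using range by (auto simp: image_subset_iff)
    moreover have "f 1 < f 2" "f 2 < f 3"
      using mono by (auto simp: strict_mono_on_def)
    moreover have "p (f 1) < p (f 2)" "p (f 2) < p (f 3)"
      using order by (auto simp: pat123_def)
    ultimately show False
      using incr_free unfolding increasing_triple_free_def by auto
  qed
qed

section \<open>Shallow involutions are the noncrossing ones\<close>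

definition crossings :: "nat \<Rightarrow> (nat \<Rightarrow> nat) \<Rightarrow> nat" where
  "crossings n p = card {(i, j). i \<in> {1..n} \<and> j \<in> {1..n} \<and> i < j \<and> j < p i \<and> p i < p j}"

lemma card_pairs_eq_double_sum:
  assumes "finite U"
  shows "int (card {(i, j). i \<in> U \<and> j \<in> U \<and> P i j}) = (\<Sum>i\<in>U. \<Sum>j\<in>U. of_bool (P i j))"
proof -
  have "{(i, j). i \<in> U \<and> j \<in> U \<and> P i j} = (SIGMA i:U. U \<inter> {j. P i j})"
    by auto
  then show ?thesis
    using assms by simp
qed

lemma orbit_involution:
  assumes "\<And>x. p (p x) = x"
  shows "orbit p x = {x, p x}"
proof
  show "orbit p x \<subseteq> {x, p x}"
  proof
    fix y
    assume "y \<in> orbit p x"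
    then show "y \<in> {x, p x}"
      by (induction rule: orbit.induct) (auto simp: assms)
  qed
  show "{x, p x} \<subseteq> orbit p x"
    using orbit.base[of p x] orbit.step[OF orbit.base, of p x] assms by auto
qed

lemma num_cycles_involution:
  assumes perm: "p permutes {1..n}" and pp: "\<And>x. p (p x) = x"
  shows "num_cycles n p = card {i \<in> {1..n}. i \<le> p i}"
proof -
  let ?V = "{i \<in> {1..n}. i \<le> p i}"
  have "orbit p ` {1..n} = (\<lambda>x. {x, p x}) ` ?V"
  proof (intro equalityI subsetI)
    fix y
    assume "y \<in> orbit p ` {1..n}"
    then obtain x where x: "x \<in> {1..n}" "y = {x, p x}"
      using orbit_involution[OF pp] by auto
    show "y \<in> (\<lambda>x. {x, p x}) ` ?V"
    proof (cases "x \<le> p x")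
      case False
      have "p x \<in> {1..n}"
        using perm x(1) by (simp add: permutes_in_image del: atLeastAtMost_iff)
      then have "p x \<in> ?V" "y = {p x, p (p x)}"
        using False x pp[of x] by auto
      then show ?thesis
        by blast
    qed (use x in auto)
  qed (use orbit_involution[OF pp] in auto)
  moreover have "inj_on (\<lambda>x. {x, p x}) ?V"
    by (rule inj_onI) (auto simp: doubleton_eq_iff)
  ultimately show ?thesis
    by (simp add: num_cycles_def card_image)
qed

lemma refl_len_involution:
  assumes perm: "p permutes {1..n}" and pp: "\<And>x. p (p x) = x"
  shows "refl_len n p = card {i \<in> {1..n}. i < p i}"
proof -
  let ?U = "{1..n}"
  define V where "V = {i \<in> ?U. i \<le> p i}"
  define W where "W = {i \<in> ?U. p i < i}"
  have maps_to: "p x \<in> ?U" if "x \<in> ?U" for x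
    using perm that by (simp add: permutes_in_image del: atLeastAtMost_iff)
  have "card V + card W = n"
  proof -
    have "V \<union> W = ?U" "V \<inter> W = {}"
      by (auto simp: V_def W_def)
    then show ?thesis
      using card_Un_disjoint[of V W] by (simp add: V_def W_def)
  qed
  moreover have "W = p ` {i \<in> ?U. i < p i}"
  proof (intro equalityI subsetI)
    fix x
    assume "x \<in> W"
    then have "x = p (p x)" "p x \<in> {i \<in> ?U. i < p i}"
      using maps_to[of x] pp[of x] by (auto simp: W_def)
    then show "x \<in> p ` {i \<in> ?U. i < p i}"
      by (rule image_eqI)
  qed (use maps_to pp in \<open>auto simp: W_def\<close>)
  moreover have "inj_on p {i \<in> ?U. i < p i}"
    by (rule inj_onI) (metis pp)
  ultimately show ?thesis
    by (simp add: refl_len_def num_cycles_involution[OF perm pp] V_def card_image)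
qed

lemma disp_eq_double_sum:
  assumes perm: "p permutes {1..n}"
  shows "int (disp n p) =
    (\<Sum>i\<in>{1..n}. \<Sum>j\<in>{1..n}. of_bool (i < j \<and> j \<le> p i) + of_bool (i < j \<and> p j \<le> i))"
proof -
  let ?U = "{1..n}"
  have "int (nat \<bar>int (p i) - int i\<bar>) =
      (\<Sum>j\<in>?U. of_bool (i < j \<and> j \<le> p i)) + (\<Sum>j\<in>?U. of_bool (j < i \<and> p i \<le> j))"
    if i: "i \<in> ?U" for i
  proof -
    have "p i \<in> ?U"
      using perm i by (simp add: permutes_in_image del: atLeastAtMost_iff)
    then have "?U \<inter> {j. i < j \<and> j \<le> p i} = {i<..p i}" "?U \<inter> {j. j < i \<and> p i \<le> j} = {p i..<i}"
      using i by auto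
    then show ?thesis
      by simp
  qed
  then have "int (disp n p) =
      (\<Sum>i\<in>?U. \<Sum>j\<in>?U. of_bool (i < j \<and> j \<le> p i)) + (\<Sum>i\<in>?U. \<Sum>j\<in>?U. of_bool (j < i \<and> p i \<le> j))"
    by (simp add: disp_def sum.distrib)
  also have "(\<Sum>i\<in>?U. \<Sum>j\<in>?U. of_bool (j < i \<and> p i \<le> j) :: int) =
      (\<Sum>i\<in>?U. \<Sum>j\<in>?U. of_bool (i < j \<and> p j \<le> i))"
    by (rule sum.swap)
  finally show ?thesis
    by (simp add: sum.distrib)
qed

text \<open>The last four terms are the four ways in which \<open>i < j\<close> can be endpoints of two crossing
  arcs. Each of them sums to the number of crossings, and \<open>3 - 1\<close> is the factor \<open>2\<close> below.\<close>

lemma involution_displacement_indicators: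
  fixes p :: "nat \<Rightarrow> nat"
  assumes pp: "\<And>x. p (p x) = x"
  shows "(of_bool (i < j \<and> j \<le> p i) + of_bool (i < j \<and> p j \<le> i) :: int) =
    of_bool (i < j \<and> p j < p i) + of_bool (i < j \<and> p i = j)
    + of_bool (i < j \<and> j < p i \<and> p i < p j) + of_bool (p j < i \<and> i < j \<and> j < p i)
    + of_bool (p i < p j \<and> p j < i \<and> i < j) - of_bool (i < p j \<and> p j < p i \<and> p i < j)"
proof -
  have "p i = j \<longleftrightarrow> p j = i" "p i = p j \<longleftrightarrow> i = j"
    using pp by metis+
  then show ?thesis
    by (cases "i < j"; cases "p i = j") (auto simp: not_less)
qed
lemma crossing_sums_reindex:
  fixes p :: "nat \<Rightarrow> nat"
  assumes maps_to: "\<And>x. x \<in> U \<Longrightarrow> p x \<in> U" and pp: "\<And>x. p (p x) = x"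
  defines "X \<equiv> (\<Sum>i\<in>U. \<Sum>j\<in>U. of_bool (i < j \<and> j < p i \<and> p i < p j) :: int)"
  shows "(\<Sum>i\<in>U. \<Sum>j\<in>U. of_bool (p j < i \<and> i < j \<and> j < p i)) = X"
    and "(\<Sum>i\<in>U. \<Sum>j\<in>U. of_bool (p i < p j \<and> p j < i \<and> i < j)) = X"
    and "(\<Sum>i\<in>U. \<Sum>j\<in>U. of_bool (i < p j \<and> p j < p i \<and> p i < j)) = X"
  unfolding X_def sum.cartesian_product
proof goal_cases
  case 1
  show ?case
    by (rule sum.reindex_bij_witness[where j = "\<lambda>(i, j). (p j, i)" and i = "\<lambda>(a, c). (c, p a)"])
       (auto simp: pp maps_to)
next
  case 2
  show ?case
    by (rule sum.reindex_bij_witness[where j = "\<lambda>(i, j). (p i, p j)" and i = "\<lambda>(a, c). (p a, p c)"])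
       (auto simp: pp maps_to)
next
  case 3
  show ?case
    by (rule sum.reindex_bij_witness[where j = "\<lambda>(i, j). (i, p j)" and i = "\<lambda>(a, c). (a, p c)"])
       (auto simp: pp maps_to)
qed

lemma disp_involution:
  assumes perm: "p permutes {1..n}" and pp: "\<And>x. p (p x) = x"
  shows "disp n p = inv_count n p + refl_len n p + 2 * crossings n p"
proof -
  let ?U = "{1..n}"
  let ?S = "\<lambda>P. (\<Sum>i\<in>?U. \<Sum>j\<in>?U. of_bool (P i j) :: int)"
  have maps_to: "p x \<in> ?U" if "x \<in> ?U" for x
    using perm that by (simp add: permutes_in_image del: atLeastAtMost_iff)
  have inv: "int (inv_count n p) = ?S (\<lambda>i j. i < j \<and> p j < p i)"
    unfolding inv_count_def by (subst card_pairs_eq_double_sum) auto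
  have cross: "int (crossings n p) = ?S (\<lambda>i j. i < j \<and> j < p i \<and> p i < p j)"
    unfolding crossings_def by (subst card_pairs_eq_double_sum) auto
  have "(\<Sum>j\<in>?U. of_bool (i < j \<and> p i = j) :: int) = of_bool (i < p i)" if "i \<in> ?U" for i
  proof -
    have "(\<Sum>j\<in>?U. of_bool (i < j \<and> p i = j) :: int) = (\<Sum>j\<in>?U. if j = p i then of_bool (i < p i) else 0)"
      by (rule sum.cong) auto
    then show ?thesis
      using maps_to[OF that] by simp
  qed
  then have refl: "int (refl_len n p) = ?S (\<lambda>i j. i < j \<and> p i = j)"
    by (simp add: refl_len_involution[OF perm pp] Int_def)
  have "int (disp n p) = ?S (\<lambda>i j. i < j \<and> p j < p i) + ?S (\<lambda>i j. i < j \<and> p i = j)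
      + ?S (\<lambda>i j. i < j \<and> j < p i \<and> p i < p j) + ?S (\<lambda>i j. p j < i \<and> i < j \<and> j < p i)
      + ?S (\<lambda>i j. p i < p j \<and> p j < i \<and> i < j) - ?S (\<lambda>i j. i < p j \<and> p j < p i \<and> p i < j)"
    unfolding disp_eq_double_sum[OF perm] involution_displacement_indicators[OF pp]
    by (simp only: sum.distrib sum_subtractf)
  also have "\<dots> = int (inv_count n p) + int (refl_len n p) + 2 * int (crossings n p)"
    by (simp only: crossing_sums_reindex[OF maps_to pp] inv[symmetric] refl[symmetric] cross[symmetric])
  finally show ?thesis
    by linarith
qed

lemma crossings_eq_0_iff:
  assumes perm: "p permutes {1..n}"
  shows "crossings n p = 0 \<longleftrightarrow> crossing_free 1 n p"
proof -
  have "finite {(i, j). i \<in> {1..n} \<and> j \<in> {1..n} \<and> i < j \<and> j < p i \<and> p i < p j}"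
    by (rule finite_subset[of _ "{1..n} \<times> {1..n}"]) auto
  then have "crossings n p = 0 \<longleftrightarrow>
      \<not> (\<exists>i j. i \<in> {1..n} \<and> j \<in> {1..n} \<and> i < j \<and> j < p i \<and> p i < p j)"
    unfolding crossings_def by (subst card_eq_0_iff) auto
  also have "\<dots> \<longleftrightarrow> crossing_free 1 n p"
    unfolding crossing_free_def
  proof (intro iffI notI)
    assume "\<exists>a c. 1 \<le> a \<and> a < c \<and> c < p a \<and> p a < p c \<and> p c \<le> n"
    then obtain a c where ac: "1 \<le> a" "a < c" "c < p a" "p a < p c" "p c \<le> n"
      by blast
    have "c \<le> n"
      using permutes_not_in[OF perm, of c] ac by fastforce
    then have "a \<in> {1..n}" "c \<in> {1..n}"
      using ac by auto
    moreover assume "\<not> (\<exists>i j. i \<in> {1..n} \<and> j \<in> {1..n} \<and> i < j \<and> j < p i \<and> p i < p j)"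
    ultimately show False
      using ac by blast
  next
    assume "\<exists>i j. i \<in> {1..n} \<and> j \<in> {1..n} \<and> i < j \<and> j < p i \<and> p i < p j"
    then obtain i j where "i \<in> {1..n}" "j \<in> {1..n}" "i < j" "j < p i" "p i < p j"
      by blast
    moreover have "p j \<in> {1..n}"
      using perm \<open>j \<in> {1..n}\<close> by (simp add: permutes_in_image del: atLeastAtMost_iff)
    moreover assume "\<not> (\<exists>a c. 1 \<le> a \<and> a < c \<and> c < p a \<and> p a < p c \<and> p c \<le> n)"
    ultimately show False
      by auto
  qed
  finally show ?thesis .
qed

lemma shallow_involution_iff:
  assumes "p permutes {1..n}" and "\<And>x. p (p x) = x"
  shows "shallow n p \<longleftrightarrow> crossing_free 1 n p"
  using disp_involution[OF assms] crossings_eq_0_iff[OF assms(1)] by (simp add: shallow_def)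

section \<open>Noncrossing involutions without an increasing triple\<close>

lemma involution_permutes:
  assumes "\<And>x. p (p x) = x" and "\<And>x. x \<notin> S \<Longrightarrow> p x = x"
  shows "p permutes S"
  unfolding permutes_def
proof (intro conjI allI impI)
  fix y
  show "\<exists>!x. p x = y"
    by (rule ex1I[of _ "p y"]) (metis assms(1))+
qed (use assms in auto)

lemma strict_antimono_interval_map_eq_reversal:
  fixes f :: "nat \<Rightarrow> nat"
  assumes maps_to: "\<And>i. a \<le> i \<Longrightarrow> i \<le> b \<Longrightarrow> a \<le> f i \<and> f i \<le> b"
    and decreasing: "\<And>i j. a \<le> i \<Longrightarrow> i < j \<Longrightarrow> j \<le> b \<Longrightarrow> f j < f i"
    and "a \<le> i" "i \<le> b"
  shows "f i = a + b - i"
proof -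
  have upper: "f (a + k) + k \<le> b" if "a + k \<le> b" for k
    using that
  proof (induction k)
    case (Suc k)
    then show ?case using decreasing[of "a + k" "a + Suc k"] by simp
  qed (use maps_to[of a] in simp)
  have lower: "a + k \<le> f (b - k)" if "a + k \<le> b" for k
    using that
  proof (induction k)
    case (Suc k)
    have "f (b - k) < f (b - Suc k)"
      using Suc.prems by (intro decreasing) auto
    with Suc show ?case by simp
  qed (use maps_to[of b] in simp)
  have "f i + (i - a) \<le> b" "a + (b - i) \<le> f i"
    using upper[of "i - a"] lower[of "b - i"] assms(3,4) by simp_all
  then show ?thesis
    by linarith
qed

definition nc123_invs :: "nat \<Rightarrow> nat \<Rightarrow> (nat \<Rightarrow> nat) set" where
  "nc123_invs l r = {p. p permutes {l..r} \<and> p \<circ> p = id \<and>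
                        increasing_triple_free l r p \<and> crossing_free l r p}"

definition split_reversal :: "nat \<Rightarrow> nat \<Rightarrow> nat \<Rightarrow> nat \<Rightarrow> nat" where
  "split_reversal l m r i =
     (if l \<le> i \<and> i \<le> m then l + m - i else if m < i \<and> i \<le> r then m + 1 + r - i else i)"

lemma split_reversal_mem:
  assumes "l \<le> m" "m < r"
  shows "split_reversal l m r \<in> nc123_invs l r"
proof -
  let ?p = "split_reversal l m r"
  have pp: "?p (?p x) = x" for x
    using assms by (auto simp: split_reversal_def)
  have "?p permutes {l..r}"
    by (rule involution_permutes[OF pp]) (use assms in \<open>auto simp: split_reversal_def\<close>)
  moreover have "?p \<circ> ?p = id"
    using pp by auto
  moreover have "increasing_triple_free l r ?p"
    unfolding increasing_triple_free_def
  proof (intro allI impI notI)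
    fix i j k
    assume "l \<le> i" "i < j" "j < k" "k \<le> r" "?p i < ?p j \<and> ?p j < ?p k"
    then show False
      using assms by (cases "j \<le> m") (auto simp: split_reversal_def split: if_splits)
  qed
  moreover have "crossing_free l r ?p"
    unfolding crossing_free_def
  proof
    assume "\<exists>a c. l \<le> a \<and> a < c \<and> c < ?p a \<and> ?p a < ?p c \<and> ?p c \<le> r"
    then obtain a c where "l \<le> a" "a < c" "c < ?p a" "?p a < ?p c" "?p c \<le> r"
      by blast
    then show False
      using assms by (cases "a \<le> m") (auto simp: split_reversal_def split: if_splits)
  qed
  ultimately show ?thesis
    by (simp add: nc123_invs_def)
qed

lemma nc123_invs_involutive: "p \<in> nc123_invs l r \<Longrightarrow> p (p x) = x"
  by (simp add: nc123_invs_def pointfree_idE)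

lemma nc123_invs_fixes: "p \<in> nc123_invs l r \<Longrightarrow> x \<notin> {l..r} \<Longrightarrow> p x = x"
  using permutes_not_in[of p "{l..r}" x] by (simp add: nc123_invs_def del: atLeastAtMost_iff)

lemma nc123_invs_maps_to: "p \<in> nc123_invs l r \<Longrightarrow> x \<in> {l..r} \<Longrightarrow> p x \<in> {l..r}"
  by (simp add: nc123_invs_def permutes_in_image del: atLeastAtMost_iff)

lemma nc123_invs_add_arc:
  assumes "l \<le> r" and q: "q \<in> nc123_invs (l + 1) (r - 1)"
  shows "q(l := r, r := l) \<in> nc123_invs l r"
proof -
  let ?p = "q(l := r, r := l)"
  have inside: "l < q x \<and> q x < r" if "l < x" "x < r" for x
    using nc123_invs_maps_to[OF q, of x] that by (cases r) auto
  have outside: "q x = x" if "\<not> (l < x \<and> x < r)" for x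
    using nc123_invs_fixes[OF q, of x] that by (cases r) auto
  have pp: "?p (?p x) = x" for x
    using inside[of x] outside[of x] outside[of l] outside[of r] nc123_invs_involutive[OF q, of x]
    by auto
  have p_maps_to: "l \<le> ?p x \<and> ?p x \<le> r" if "l \<le> x" "x \<le> r" for x
    using inside[of x] that by (cases "x = l \<or> x = r") auto
  have "?p permutes {l..r}"
    by (rule involution_permutes[OF pp]) (use outside assms(1) in auto)
  moreover have "?p \<circ> ?p = id"
    using pp by auto
  moreover have "increasing_triple_free l r ?p"
    unfolding increasing_triple_free_def
  proof (intro allI impI notI)
    fix i j k
    assume ijk: "l \<le> i" "i < j" "j < k" "k \<le> r" and incr: "?p i < ?p j \<and> ?p j < ?p k"
    have "l < i" "k < r"
      using incr ijk p_maps_to[of j] by (auto split: if_splits)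
    then have "q i < q j \<and> q j < q k" "l + 1 \<le> i" "k \<le> r - 1"
      using ijk incr by auto
    moreover have "increasing_triple_free (l + 1) (r - 1) q"
      using q by (simp add: nc123_invs_def)
    ultimately show False
      using ijk unfolding increasing_triple_free_def by blast
  qed
  moreover have "crossing_free l r ?p"
    unfolding crossing_free_def
  proof
    assume "\<exists>a c. l \<le> a \<and> a < c \<and> c < ?p a \<and> ?p a < ?p c \<and> ?p c \<le> r"
    then obtain a c where ac: "l \<le> a" "a < c" "c < ?p a" "?p a < ?p c" "?p c \<le> r"
      by blast
    have "a \<noteq> l" "a \<noteq> r"
      using ac by (auto split: if_splits)
    moreover have "l < a \<and> a < r"
      using ac outside[of a] \<open>a \<noteq> l\<close> \<open>a \<noteq> r\<close> by fastforce
    ultimately have pa: "?p a = q a" and "l < c" "c < r"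
      using ac inside[of a] by auto
    then have pc: "?p c = q c"
      by simp
    have "c < q a" "q a < q c" "q c \<le> r"
      using ac(3-5) unfolding pa pc .
    then have "l + 1 \<le> a \<and> a < c \<and> c < q a \<and> q a < q c \<and> q c \<le> r - 1"
      using ac \<open>l < a \<and> a < r\<close> inside[of c] \<open>l < c\<close> \<open>c < r\<close> by auto
    moreover have "crossing_free (l + 1) (r - 1) q"
      using q by (simp add: nc123_invs_def)
    ultimately show False
      unfolding crossing_free_def by blast
  qed
  ultimately show ?thesis
    by (simp add: nc123_invs_def)
qed

lemma nc123_invs_remove_arc:
  assumes p: "p \<in> nc123_invs l r" and pl: "p l = r"
  shows "p(l := l, r := r) \<in> nc123_invs (l + 1) (r - 1)"
proof -
  let ?q = "p(l := l, r := r)"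
  have pr: "p r = l"
    using nc123_invs_involutive[OF p, of l] pl by simp
  have inner: "?q x = p x" if "l < x" "x < r" for x
    using that by simp
  have outside: "?q x = x" if "\<not> (l < x \<and> x < r)" for x
    using nc123_invs_fixes[OF p, of x] that by auto
  have qq: "?q (?q x) = x" for x
    using nc123_invs_involutive[OF p, of x] pl pr by auto
  have "?q permutes {l + 1..r - 1}"
  proof (rule involution_permutes[OF qq])
    fix x
    assume "x \<notin> {l + 1..r - 1}"
    then show "?q x = x"
      by (intro outside) auto
  qed
  moreover have "?q \<circ> ?q = id"
    using qq by auto
  moreover have "increasing_triple_free (l + 1) (r - 1) ?q"
    unfolding increasing_triple_free_def
  proof (intro allI impI notI)
    fix i j k
    assume ijk: "l + 1 \<le> i" "i < j" "j < k" "k \<le> r - 1" and incr: "?q i < ?q j \<and> ?q j < ?q k"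
    then have "l < i" "k < r"
      by auto
    then have "p i < p j \<and> p j < p k"
      using incr ijk inner[of i] inner[of j] inner[of k] by auto
    moreover have "increasing_triple_free l r p"
      using p by (simp add: nc123_invs_def)
    ultimately show False
      using ijk \<open>l < i\<close> \<open>k < r\<close> unfolding increasing_triple_free_def by auto
  qed
  moreover have "crossing_free (l + 1) (r - 1) ?q"
    unfolding crossing_free_def
  proof
    assume "\<exists>a c. l + 1 \<le> a \<and> a < c \<and> c < ?q a \<and> ?q a < ?q c \<and> ?q c \<le> r - 1"
    then obtain a c where ac: "l + 1 \<le> a" "a < c" "c < ?q a" "?q a < ?q c" "?q c \<le> r - 1"
      by blast
    have "a < r" "c < r"
      using ac outside[of a] outside[of c] by fastforce+
    then have "l \<le> a \<and> a < c \<and> c < p a \<and> p a < p c \<and> p c \<le> r"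
      using ac inner[of a] inner[of c] by auto
    moreover have "crossing_free l r p"
      using p by (simp add: nc123_invs_def)
    ultimately show False
      unfolding crossing_free_def by blast
  qed
  ultimately show ?thesis
    by (simp add: nc123_invs_def)
qed

lemma nc123_invs_blocks:
  assumes p: "p \<in> nc123_invs l r" and "l \<le> r" "p l \<noteq> r"
  shows "l \<le> p l" "p l < r"
    and "\<And>x. l \<le> x \<Longrightarrow> x \<le> p l \<Longrightarrow> l \<le> p x \<and> p x \<le> p l"
    and "\<And>x. p l < x \<Longrightarrow> x \<le> r \<Longrightarrow> p l < p x \<and> p x \<le> r"
proof -
  let ?m = "p l"
  have maps_to: "l \<le> p x \<and> p x \<le> r" if "l \<le> x" "x \<le> r" for x
    using nc123_invs_maps_to[OF p, of x] that by auto
  show "l \<le> ?m" "?m < r"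
    using maps_to[of l] assms(2,3) by auto
  have pm: "p ?m = l"
    using nc123_invs_involutive[OF p] .
  show first: "l \<le> p x \<and> p x \<le> ?m" if "l \<le> x" "x \<le> ?m" for x
  proof (rule ccontr)
    assume "\<not> (l \<le> p x \<and> p x \<le> ?m)"
    with maps_to[of x] that \<open>?m < r\<close> have "?m < p x" "p x \<le> r"
      by auto
    moreover have "l < x"
      using \<open>?m < p x\<close> that pm by (metis le_neq_implies_less less_irrefl)
    moreover have "x < ?m"
      using \<open>?m < p x\<close> that pm by (metis le_neq_implies_less less_irrefl order.strict_trans1)
    moreover have "crossing_free l r p"
      using p by (simp add: nc123_invs_def)
    ultimately show False
      unfolding crossing_free_def by blast
  qed
  show "?m < p x \<and> p x \<le> r" if "?m < x" "x \<le> r" for x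
  proof (rule ccontr)
    assume "\<not> (?m < p x \<and> p x \<le> r)"
    with maps_to[of x] that \<open>l \<le> ?m\<close> have "l \<le> p x" "p x \<le> ?m"
      by auto
    then have "p (p x) \<le> ?m"
      using first by blast
    then show False
      using nc123_invs_involutive[OF p, of x] that by simp
  qed
qed

lemma nc123_invs_eq_split_reversal:
  assumes p: "p \<in> nc123_invs l r" and "l \<le> r" "p l \<noteq> r"
  shows "p = split_reversal l (p l) r"
proof
  fix x
  let ?m = "p l"
  note blocks = nc123_invs_blocks[OF assms]
  have inj: "p i \<noteq> p j" if "i \<noteq> j" for i j
    using that nc123_invs_involutive[OF p] by metis
  have incr_free: "increasing_triple_free l r p"
    using p by (simp add: nc123_invs_def)
  have "p j < p i" if "l \<le> i" "i < j" "j \<le> ?m" for i j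
  proof (rule ccontr)
    assume "\<not> p j < p i"
    with inj[of i j] that have "p i < p j"
      by simp
    moreover have "p j < p r"
      using blocks(3)[of j] blocks(4)[of r] that blocks(2) by auto
    ultimately show False
      using incr_free that blocks(2) unfolding increasing_triple_free_def by fastforce
  qed
  then have left: "l \<le> x \<Longrightarrow> x \<le> ?m \<Longrightarrow> p x = l + ?m - x"
    using blocks(3) by (intro strict_antimono_interval_map_eq_reversal) auto
  have "p j < p i" if "?m < i" "i < j" "j \<le> r" for i j
  proof (rule ccontr)
    assume "\<not> p j < p i"
    with inj[of i j] that have "p i < p j"
      by simp
    moreover have "p l < p i"
      using blocks(4)[of i] that by auto
    ultimately show False
      using incr_free that blocks(1) unfolding increasing_triple_free_def by fastforce
  qed
  then have right: "?m < x \<Longrightarrow> x \<le> r \<Longrightarrow> p x = (?m + 1) + r - x"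
    using blocks(4) by (intro strict_antimono_interval_map_eq_reversal) (auto simp: Suc_le_eq)
  show "p x = split_reversal l ?m r x"
    using left right nc123_invs_fixes[OF p, of x] blocks(2)
    by (auto simp: split_reversal_def)
qed

lemma nc123_invs_decompose:
  assumes "l \<le> r"
  shows "nc123_invs l r = (\<lambda>m. split_reversal l m r) ` {l..<r}
                           \<union> (\<lambda>q. q(l := r, r := l)) ` nc123_invs (l + 1) (r - 1)"
    (is "_ = ?A \<union> ?B")
proof (intro equalityI subsetI)
  fix p
  assume p: "p \<in> nc123_invs l r"
  show "p \<in> ?A \<union> ?B"
  proof (cases "p l = r")
    case True
    then have "p = (p(l := l, r := r))(l := r, r := l)"
      using nc123_invs_involutive[OF p, of l] by auto
    then have "p \<in> ?B"
      using nc123_invs_remove_arc[OF p True] by (rule image_eqI)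
    then show ?thesis ..
  next
    case False
    have "p l \<in> {l..<r}"
      using nc123_invs_blocks(1,2)[OF p assms False] by simp
    with nc123_invs_eq_split_reversal[OF p assms False] have "p \<in> ?A"
      by (rule image_eqI)
    then show ?thesis ..
  qed
next
  fix p
  assume "p \<in> ?A \<union> ?B"
  then show "p \<in> nc123_invs l r"
    using split_reversal_mem nc123_invs_add_arc[OF assms] by auto
qed

lemma finite_nc123_invs: "finite (nc123_invs l r)"
proof (rule finite_subset)
  show "nc123_invs l r \<subseteq> {p. p permutes {l..r}}"
    by (auto simp: nc123_invs_def)
qed (simp add: finite_permutations)

lemma nc123_invs_empty_interval: "r < l \<Longrightarrow> nc123_invs l r = {id}"
  by (auto simp: nc123_invs_def increasing_triple_free_def crossing_free_def)

lemma card_nc123_invs_step: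
  assumes "l \<le> r"
  shows "card (nc123_invs l r) = (r - l) + card (nc123_invs (l + 1) (r - 1))"
proof -
  let ?A = "(\<lambda>m. split_reversal l m r) ` {l..<r}"
  let ?B = "(\<lambda>q. q(l := r, r := l)) ` nc123_invs (l + 1) (r - 1)"
  have "?A \<inter> ?B = {}"
    by (force simp: split_reversal_def dest: fun_cong[where x = l])
  moreover have "inj_on (\<lambda>m. split_reversal l m r) {l..<r}"
    by (rule inj_onI) (force simp: split_reversal_def dest: fun_cong[where x = l])
  moreover have "inj_on (\<lambda>q. q(l := r, r := l)) (nc123_invs (l + 1) (r - 1))"
  proof (rule inj_onI)
    fix q q'
    assume q: "q \<in> nc123_invs (l + 1) (r - 1)" and q': "q' \<in> nc123_invs (l + 1) (r - 1)"
      and eq: "q(l := r, r := l) = q'(l := r, r := l)"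
    show "q = q'"
    proof
      fix x
      show "q x = q' x"
      proof (cases "x = l \<or> x = r")
        case True
        then have "x \<notin> {l + 1..r - 1}"
          by (cases r) auto
        then show ?thesis
          using nc123_invs_fixes[OF q] nc123_invs_fixes[OF q'] by simp
      next
        case False
        then show ?thesis
          using fun_cong[OF eq, of x] by simp
      qed
    qed
  qed
  ultimately show ?thesis
    unfolding nc123_invs_decompose[OF assms]
    by (simp add: card_Un_disjoint finite_nc123_invs card_image)
qed

lemma square_succ_div_4: "(Suc j)\<^sup>2 div 4 = j + (j - 1)\<^sup>2 div 4"
proof (cases j)
  case (Suc i)
  then have "(Suc j)\<^sup>2 = (j - 1)\<^sup>2 + 4 * j"
    by (simp add: power2_eq_square)
  then show ?thesis
    by simp
qed simp

lemma card_nc123_invs: "card (nc123_invs l r) = (r + 1 - l)\<^sup>2 div 4 + 1"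
proof (induction "r + 1 - l" arbitrary: l r rule: less_induct)
  case less
  show ?case
  proof (cases "l \<le> r")
    case True
    have "(r + 1 - l)\<^sup>2 div 4 = (r - l) + (r - 1 + 1 - (l + 1))\<^sup>2 div 4"
      using square_succ_div_4[of "r - l"] True by (simp add: Suc_diff_le)
    moreover have "card (nc123_invs (l + 1) (r - 1)) = (r - 1 + 1 - (l + 1))\<^sup>2 div 4 + 1"
      using True by (intro less) auto
    ultimately show ?thesis
      using card_nc123_invs_step[OF True] by simp
  qed (simp add: nc123_invs_empty_interval)
qed

theorem theorem5p4:
  fixes n :: nat
  assumes "n \<ge> 1"
  shows "card {p. p permutes {1..n} \<and> involution p \<and> avoids n p 3 pat123 \<and> shallow n p}
           = n\<^sup>2 div 4 + 1"
proof -
  have "{p. p permutes {1..n} \<and> involution p \<and> avoids n p 3 pat123 \<and> shallow n p} = nc123_invs 1 n"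
    unfolding nc123_invs_def involution_def avoids_123_iff
    using shallow_involution_iff by (auto simp: pointfree_idE)
  then show ?thesis
    using card_nc123_invs[of 1 n] by simp
qed

end
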